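(* Let $G$ be a finite group with a cyclic maximal subgroup. Then $G$ is solvable and $G''\leq Z(G)$.
   Context: $G''=[G',G']$ is the second derived subgroup and $Z(G)$ is the center of $G$. *)

theory Defs
  imports "HOL-Algebra.Algebra"
begin

definition center_of :: "('a, 'b) monoid_scheme \<Rightarrow> 'a set" where
  "center_of G = {z \<in> carrier G. \<forall>g \<in> carrier G. z \<otimes>\<^bsub>G\<^esub> g = g \<otimes>\<^bsub>G\<^esub> z}"

definition maximal_subgroup :: "'a set \<Rightarrow> ('a, 'b) monoid_scheme \<Rightarrow> bool" where
  "maximal_subgroup H G \<longleftrightarrow> subgroup H G \<and> H \<noteq> carrier G \<and>
     (\<forall>K. subgroup K G \<and> H \<subseteq> K \<longrightarrow> K = H \<or> K = carrier G)"

end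

theory Submission
  imports Defs
begin

(*
  If the cyclic maximal subgroup H = <g> is normal, then G = H<a> for any a outside H, so
  G/H is abelian, G' <= H is abelian, and G'' = 1.

  Otherwise H is self-normalizing and, for x outside H, every element of H whose
  x-conjugate lies in H is central; in particular Z(G) <= H. Choosing the coset
  representatives along the <g>-orbits of the right cosets of H, the transfer V : G -> H
  satisfies V(g) = g z with z central. Hence M = V^-1(Z(G)) contains G' (as H is abelian)
  and M /\ H = Z(G). Conjugation by g induces an automorphism of M/Z(G) with no nontrivial
  fixed point and no proper nontrivial invariant subgroup (such a subgroup L would give a
  subgroup LH strictly between H and G). An automorphism of this kind forces the group to
  be abelian: it normalizes some Sylow subgroup, which then is the whole group, and then
  it normalizes the nontrivial center. Therefore G'' <= M' <= Z(G), and G''' = 1.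
*)

lemma (in group) inv_mult_cancel_left [simp]:
  "x \<in> carrier G \<Longrightarrow> y \<in> carrier G \<Longrightarrow> inv x \<otimes> (x \<otimes> y) = y"
  by (simp add: m_assoc[symmetric])

lemma (in group) mult_inv_cancel_left [simp]:
  "x \<in> carrier G \<Longrightarrow> y \<in> carrier G \<Longrightarrow> x \<otimes> (inv x \<otimes> y) = y"
  by (simp add: m_assoc[symmetric])

lemma (in group) inj_on_conj:
  assumes "x \<in> carrier G" "y \<in> carrier G"
  shows "inj_on (\<lambda>r. x \<otimes> r \<otimes> y) (carrier G)"
  using assms by (intro inj_onI) simp

lemma (in group) card_conj_image:
  assumes "x \<in> carrier G" "y \<in> carrier G" "A \<subseteq> carrier G"
  shows "card ((\<lambda>r. x \<otimes> r \<otimes> y) ` A) = card A"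
  using card_image[OF inj_on_subset[OF inj_on_conj]] assms by blast

lemma (in group) conj_hom:
  assumes "x \<in> carrier G"
  shows "(\<lambda>r. x \<otimes> r \<otimes> inv x) \<in> hom G G"
  using assms by (intro homI) (simp_all add: m_assoc)

lemma (in group) subgroup_conj_image:
  assumes "subgroup Q G" "x \<in> carrier G"
  shows "subgroup ((\<lambda>r. x \<otimes> r \<otimes> inv x) ` Q) G"
  using group_hom.subgroup_img_is_subgroup[OF
      group_hom.intro[OF is_group is_group group_hom_axioms.intro[OF conj_hom[OF assms(2)]]] assms(1)] .

lemma (in group) mem_normalizer_iff:
  assumes "A \<subseteq> carrier G"
  shows "x \<in> normalizer G A \<longleftrightarrow> x \<in> carrier G \<and> (\<lambda>a. x \<otimes> a \<otimes> inv x) ` A = A"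
proof -
  have "x <# A #> inv x = (\<lambda>a. x \<otimes> a \<otimes> inv x) ` A"
    unfolding l_coset_def r_coset_def by auto
  then show ?thesis using assms unfolding normalizer_def stabilizer_def by auto
qed

lemma (in group) conj_image_eq_of_subset:
  assumes "finite A" "A \<subseteq> carrier G" "x \<in> carrier G" "\<And>a. a \<in> A \<Longrightarrow> x \<otimes> a \<otimes> inv x \<in> A"
  shows "(\<lambda>a. x \<otimes> a \<otimes> inv x) ` A = A"
  using assms card_conj_image by (intro card_subset_eq) auto

lemma (in group) rcos_eq_iff:
  assumes "subgroup P G" "a \<in> carrier G" "b \<in> carrier G"
  shows "P #> a = P #> b \<longleftrightarrow> a \<otimes> inv b \<in> P"
  using assms subgroup.rcos_module[OF assms(1) is_group] repr_independence repr_independenceD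
  by metis

lemma (in group) rcosets_mult_closed:
  assumes "P \<subseteq> carrier G" "c \<in> rcosets P" "y \<in> carrier G"
  shows "c #> y \<in> rcosets P"
  using assms coset_mult_assoc rcosetsI unfolding RCOSETS_def by auto

lemma (in group) bij_betw_rcosets_mult:
  assumes P: "P \<subseteq> carrier G" and x: "x \<in> carrier G"
  shows "bij_betw (\<lambda>c. c #> x) (rcosets P) (rcosets P)"
proof -
  have cS: "c \<subseteq> carrier G" if "c \<in> rcosets P" for c
    using that P unfolding RCOSETS_def r_coset_def by auto
  show ?thesis
    by (rule bij_betwI[where g = "\<lambda>c. c #> inv x"])
      (use x rcosets_mult_closed[OF P] coset_mult_assoc[OF cS] coset_mult_one[OF cS] in auto)
qed

lemma (in group) subgroup_set_mult_of_normalizes: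
  assumes N: "subgroup N G" and K: "subgroup K G"
    and conj: "\<And>k l. k \<in> K \<Longrightarrow> l \<in> N \<Longrightarrow> k \<otimes> l \<otimes> inv k \<in> N"
  shows "subgroup (N <#> K) G"
proof -
  have NS: "N \<subseteq> carrier G" and KS: "K \<subseteq> carrier G" using N K subgroup.subset by auto
  show ?thesis
  proof (rule subgroupI)
    show "N <#> K \<subseteq> carrier G" using setmult_subset_G[OF NS KS] .
    show "N <#> K \<noteq> {}" using subgroup.one_closed[OF N] subgroup.one_closed[OF K]
      unfolding set_mult_def by blast
    show "inv x \<in> N <#> K" if x: "x \<in> N <#> K" for x
    proof -
      obtain l k where lk: "l \<in> N" "k \<in> K" "x = l \<otimes> k" using x unfolding set_mult_def by blast
      have "inv x = (inv k \<otimes> inv l \<otimes> inv (inv k)) \<otimes> inv k"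
        using lk subsetD[OF NS] subsetD[OF KS] by (simp add: m_assoc inv_mult_group)
      moreover have "inv k \<otimes> inv l \<otimes> inv (inv k) \<in> N"
        using conj lk N K by (simp add: subgroup.m_inv_closed)
      ultimately show ?thesis using subgroup.m_inv_closed[OF K lk(2)] unfolding set_mult_def by blast
    qed
    show "x \<otimes> y \<in> N <#> K" if xy: "x \<in> N <#> K" "y \<in> N <#> K" for x y
    proof -
      obtain l1 k1 l2 k2 where lk: "l1 \<in> N" "k1 \<in> K" "x = l1 \<otimes> k1" "l2 \<in> N" "k2 \<in> K" "y = l2 \<otimes> k2"
        using xy unfolding set_mult_def by blast
      have "x \<otimes> y = (l1 \<otimes> (k1 \<otimes> l2 \<otimes> inv k1)) \<otimes> (k1 \<otimes> k2)"
        using lk subsetD[OF NS] subsetD[OF KS] by (simp add: m_assoc)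
      moreover have "l1 \<otimes> (k1 \<otimes> l2 \<otimes> inv k1) \<in> N" using conj lk N by (simp add: subgroup.m_closed)
      ultimately show ?thesis using subgroup.m_closed[OF K lk(2,5)] unfolding set_mult_def by blast
    qed
  qed
qed

lemma (in group) subset_set_mult_subgroup:
  assumes N: "subgroup N G" and K: "subgroup K G"
  shows "N \<subseteq> N <#> K" "K \<subseteq> N <#> K"
proof -
  have "l = l \<otimes> \<one>" "k = \<one> \<otimes> k" if "l \<in> N" "k \<in> K" for l k
    using that subgroup.mem_carrier[OF N] subgroup.mem_carrier[OF K] by simp_all
  then show "N \<subseteq> N <#> K" "K \<subseteq> N <#> K"
    using subgroup.one_closed[OF N] subgroup.one_closed[OF K] unfolding set_mult_def by blast+
qed

lemma (in group_hom) subgroup_preimage: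
  assumes "subgroup K H"
  shows "subgroup {x \<in> carrier G. h x \<in> K} G"
proof (rule G.subgroupI)
  show "{x \<in> carrier G. h x \<in> K} \<noteq> {}"
    using subgroup.one_closed[OF assms] by (auto intro!: exI[of _ "\<one>\<^bsub>G\<^esub>"])
qed (use assms in \<open>auto intro: subgroup.m_closed subgroup.m_inv_closed\<close>)

definition centralizer :: "('a, 'b) monoid_scheme \<Rightarrow> 'a \<Rightarrow> 'a set" where
  "centralizer G c = {y \<in> carrier G. y \<otimes>\<^bsub>G\<^esub> c = c \<otimes>\<^bsub>G\<^esub> y}"

lemma (in group) subgroup_centralizer:
  assumes c: "c \<in> carrier G"
  shows "subgroup (centralizer G c) G"
proof (rule subgroupI)
  show "inv y \<in> centralizer G c" if "y \<in> centralizer G c" for y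
  proof -
    have y: "y \<in> carrier G" "y \<otimes> c = c \<otimes> y" using that unfolding centralizer_def by auto
    have "inv y \<otimes> (y \<otimes> c) \<otimes> inv y = inv y \<otimes> (c \<otimes> y) \<otimes> inv y" using y(2) by simp
    then show ?thesis using y(1) c unfolding centralizer_def by (simp add: m_assoc)
  qed
  show "y \<otimes> z \<in> centralizer G c" if "y \<in> centralizer G c" "z \<in> centralizer G c" for y z
  proof -
    have "y \<otimes> z \<otimes> c = y \<otimes> (c \<otimes> z)" "y \<otimes> c = c \<otimes> y" "y \<in> carrier G" "z \<in> carrier G"
      using that c unfolding centralizer_def by (auto simp: m_assoc)
    then show ?thesis using c unfolding centralizer_def by (simp add: m_assoc[symmetric])
  qed
qed (use c in \<open>auto simp: centralizer_def\<close>)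

lemma center_of_eq_Inter_centralizer:
  "center_of G = carrier G \<inter> (\<Inter>c\<in>carrier G. centralizer G c)"
  unfolding center_of_def centralizer_def by auto

lemma center_of_subset_carrier: "center_of G \<subseteq> carrier G"
  unfolding center_of_def by auto

lemma center_of_carrier: "z \<in> center_of G \<Longrightarrow> z \<in> carrier G"
  unfolding center_of_def by auto

lemma center_of_commute: "z \<in> center_of G \<Longrightarrow> y \<in> carrier G \<Longrightarrow> z \<otimes>\<^bsub>G\<^esub> y = y \<otimes>\<^bsub>G\<^esub> z"
  unfolding center_of_def by auto

lemma (in group) subgroup_center_of: "subgroup (center_of G) G"
proof -
  have "subgroup (\<Inter>(insert (carrier G) ((centralizer G) ` carrier G))) G"
    by (rule subgroups_Inter) (auto intro: subgroup_self subgroup_centralizer)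
  then show ?thesis unfolding center_of_eq_Inter_centralizer by simp
qed

lemma (in group) center_of_conj:
  assumes "z \<in> center_of G" "x \<in> carrier G"
  shows "x \<otimes> z \<otimes> inv x = z"
proof -
  have "x \<otimes> z = z \<otimes> x" "z \<in> carrier G"
    using center_of_commute[OF assms] center_of_carrier[OF assms(1)] by auto
  then show ?thesis using assms(2) by (simp add: m_assoc)
qed

lemma (in group) conj_by_center_of:
  assumes "z \<in> center_of G" "h \<in> carrier G"
  shows "z \<otimes> h \<otimes> inv z = h"
proof -
  have "z \<otimes> h = h \<otimes> z" "z \<in> carrier G"
    using center_of_commute[OF assms] center_of_carrier[OF assms(1)] by auto
  then show ?thesis using assms(2) by (simp add: m_assoc)
qed

lemma (in normal) rcos_mem_iff_mem_Union:
  assumes L: "subgroup L (G Mod H)" and a: "a \<in> carrier G"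
  shows "H #> a \<in> L \<longleftrightarrow> a \<in> \<Union>L"
proof
  show "H #> a \<in> L \<Longrightarrow> a \<in> \<Union>L" using rcos_self[OF a subgroup_axioms] by blast
  assume "a \<in> \<Union>L"
  then obtain C where C: "C \<in> L" "a \<in> C" by blast
  then obtain m where "m \<in> carrier G" "C = H #> m"
    using subgroup.subset[OF L] unfolding FactGroup_def RCOSETS_def by auto
  then show "H #> a \<in> L" using C repr_independence[OF _ _ subgroup_axioms] by metis
qed

lemma (in normal) subgroup_Union_FactGroup:
  assumes L: "subgroup L (G Mod H)"
  shows "subgroup (\<Union>L) G"
proof -
  have LS: "L \<subseteq> rcosets H" using subgroup.subset[OF L] unfolding FactGroup_def by simp
  have US: "\<Union>L \<subseteq> carrier G" using LS subgroup.rcosets_carrier[OF subgroup_axioms is_group] by blast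
  show ?thesis
  proof (rule subgroupI)
    have "H \<in> L" using subgroup.one_closed[OF L] by simp
    moreover have "\<one> \<in> H" using subgroup.one_closed[OF subgroup_axioms] .
    ultimately have "\<one> \<in> \<Union>L" by blast
    then show "\<Union>L \<noteq> {}" by blast
    show "inv a \<in> \<Union>L" if "a \<in> \<Union>L" for a
      using that subsetD[OF US that] rcos_mem_iff_mem_Union[OF L] subgroup.m_inv_closed[OF L]
        inv_FactGroup rcos_inv subsetD[OF LS] unfolding FactGroup_def
      by (metis inv_closed partial_object.select_convs(1))
    show "a \<otimes> b \<in> \<Union>L" if "a \<in> \<Union>L" "b \<in> \<Union>L" for a b
      using that subsetD[OF US] rcos_mem_iff_mem_Union[OF L] subgroup.m_closed[OF L] rcos_sum
      by (metis m_closed mult_FactGroup)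
  qed (use US in blast)
qed

lemma (in group) derived_subset_of_commutators:
  assumes "subgroup N G" "\<And>a b. a \<in> A \<Longrightarrow> b \<in> A \<Longrightarrow> a \<otimes> b \<otimes> inv a \<otimes> inv b \<in> N"
  shows "derived G A \<subseteq> N"
  unfolding derived_def using assms by (intro generate_subgroup_incl) auto

lemma (in group) derived_trivial_of_commute:
  assumes A: "A \<subseteq> carrier G" and comm: "\<And>a b. a \<in> A \<Longrightarrow> b \<in> A \<Longrightarrow> a \<otimes> b = b \<otimes> a"
  shows "derived G A \<subseteq> {\<one>}"
proof (rule derived_subset_of_commutators[OF triv_subgroup])
  fix a b assume ab: "a \<in> A" "b \<in> A"
  then have "a \<otimes> b \<otimes> inv a \<otimes> inv b = b \<otimes> a \<otimes> inv a \<otimes> inv b" using comm by simp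
  moreover have "a \<in> carrier G" "b \<in> carrier G" using ab A by auto
  ultimately show "a \<otimes> b \<otimes> inv a \<otimes> inv b \<in> {\<one>}" by (simp add: m_assoc)
qed

lemma (in group) derived_subset_center_of:
  assumes "A \<subseteq> center_of G"
  shows "derived G A \<subseteq> {\<one>}"
proof (rule derived_trivial_of_commute)
  show "A \<subseteq> carrier G" using assms center_of_subset_carrier by (rule order_trans)
  show "a \<otimes> b = b \<otimes> a" if "a \<in> A" "b \<in> A" for a b
  proof -
    have "a \<in> center_of G" "b \<in> center_of G" using that assms by auto
    then show ?thesis using center_of_commute[of a G b] center_of_carrier[of b G] by simp
  qed
qed

lemma (in group) solvable_of_derived_derived_subset_center:
  assumes "derived G (derived G (carrier G)) \<subseteq> center_of G"
  shows "solvable G"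
proof -
  have "(derived G ^^ 3) (carrier G) \<subseteq> {\<one>}"
    using derived_subset_center_of[OF assms] by (simp add: numeral_3_eq_3)
  moreover have "\<one> \<in> (derived G ^^ 3) (carrier G)"
    using subgroup.one_closed[OF exp_of_derived_is_subgroup[OF subgroup_self]] by blast
  ultimately show ?thesis using solvable_iff_trivial_derived_seq by blast
qed

lemma (in group) times_int_pow_mult:
  fixes i j :: int
  assumes "h1 \<in> carrier G" "h2 \<in> carrier G" "a \<in> carrier G"
  shows "h1 \<otimes> a [^] i \<otimes> (h2 \<otimes> a [^] j) = (h1 \<otimes> (a [^] i \<otimes> h2 \<otimes> inv (a [^] i))) \<otimes> a [^] (i + j)"
  using assms by (simp add: m_assoc int_pow_mult)

lemma (in group) normal_maximal_subgroup_times_powers: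
  assumes N: "H \<lhd> G" and max: "maximal_subgroup H G" and a: "a \<in> carrier G" "a \<notin> H"
  shows "carrier G = H <#> generate G {a}"
proof -
  have H: "subgroup H G" using N normal_imp_subgroup by blast
  have A: "subgroup (generate G {a}) G" using generate_is_subgroup a(1) by simp
  have "subgroup (H <#> generate G {a}) G"
    using subgroup_set_mult_of_normalizes[OF H A] N normal_inv_iff subgroup.mem_carrier[OF A] by blast
  moreover have "H \<subseteq> H <#> generate G {a}" using subset_set_mult_subgroup(1)[OF H A] .
  moreover have "a \<in> H <#> generate G {a}"
    using subgroup.one_closed[OF H] generate.incl[of a "{a}" G] a(1) unfolding set_mult_def by force
  ultimately show ?thesis using max a unfolding maximal_subgroup_def by blast
qed

lemma (in group) commutator_mem_normal_maximal_subgroup: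
  assumes N: "H \<lhd> G" and max: "maximal_subgroup H G" and x: "x \<in> carrier G" and y: "y \<in> carrier G"
  shows "x \<otimes> y \<otimes> inv x \<otimes> inv y \<in> H"
proof -
  have Hsub: "subgroup H G" and conj: "\<And>u h. u \<in> carrier G \<Longrightarrow> h \<in> H \<Longrightarrow> u \<otimes> h \<otimes> inv u \<in> H"
    using N normal_inv_iff by auto
  have HS: "H \<subseteq> carrier G" using Hsub subgroup.subset by auto
  obtain a where a: "a \<in> carrier G" "a \<notin> H" using max HS unfolding maximal_subgroup_def by blast
  have decomp: "\<exists>h\<in>H. \<exists>i::int. z = h \<otimes> a [^] i" if "z \<in> carrier G" for z
    using that normal_maximal_subgroup_times_powers[OF N max a] generate_pow[OF a(1)]
    unfolding set_mult_def by auto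
  obtain h1 i where h1: "h1 \<in> H" "x = h1 \<otimes> a [^] (i::int)" using decomp[OF x] by blast
  obtain h2 j where h2: "h2 \<in> H" "y = h2 \<otimes> a [^] (j::int)" using decomp[OF y] by blast
  define u where "u = h1 \<otimes> (a [^] i \<otimes> h2 \<otimes> inv (a [^] i))"
  define v where "v = h2 \<otimes> (a [^] j \<otimes> h1 \<otimes> inv (a [^] j))"
  have uv: "u \<in> H" "v \<in> H" unfolding u_def v_def using conj a h1 h2 Hsub by (simp_all add: subgroup.m_closed)
  note mult = times_int_pow_mult[OF subsetD[OF HS] subsetD[OF HS] a(1)]
  have "x \<otimes> y = u \<otimes> a [^] (i + j)" unfolding u_def h1 h2 by (rule mult[OF h1(1) h2(1)])
  moreover have "y \<otimes> x = v \<otimes> a [^] (i + j)"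
    unfolding v_def h1 h2 using mult[OF h2(1) h1(1), of j i] by (simp add: add.commute)
  moreover have "x \<otimes> y \<otimes> inv x \<otimes> inv y = (x \<otimes> y) \<otimes> inv (y \<otimes> x)"
    using x y by (simp add: m_assoc inv_mult_group)
  ultimately have "x \<otimes> y \<otimes> inv x \<otimes> inv y = u \<otimes> inv v"
    using uv subsetD[OF HS] a by (simp add: m_assoc inv_mult_group)
  then show ?thesis using uv Hsub by (simp add: subgroup.m_closed subgroup.m_inv_closed)
qed

lemma (in group) derived_derived_trivial_of_normal_maximal_comm:
  assumes N: "H \<lhd> G" and max: "maximal_subgroup H G"
    and comm: "\<And>a b. a \<in> H \<Longrightarrow> b \<in> H \<Longrightarrow> a \<otimes> b = b \<otimes> a"
  shows "derived G (derived G (carrier G)) \<subseteq> {\<one>}"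
proof -
  have Hsub: "subgroup H G" using N normal_imp_subgroup by blast
  have "derived G (carrier G) \<subseteq> H"
    using derived_subset_of_commutators[OF Hsub] commutator_mem_normal_maximal_subgroup[OF N max] by blast
  then have "derived G (derived G (carrier G)) \<subseteq> derived G H" by (rule mono_derived)
  also have "\<dots> \<subseteq> {\<one>}" by (rule derived_trivial_of_commute[OF subgroup.subset[OF Hsub] comm])
  finally show ?thesis .
qed

lemma (in group) cyclic_subgroup_generator:
  assumes H: "subgroup H G" and cyc: "cyclic_group (G\<lparr>carrier := H\<rparr>)"
  obtains g where "g \<in> carrier G" "H = range (\<lambda>n::int. g [^] n)"
proof -
  interpret Hg: group "G\<lparr>carrier := H\<rparr>" using subgroup_imp_group[OF H] .
  obtain g where g: "g \<in> H" "H = range (\<lambda>n::int. g [^]\<^bsub>G\<lparr>carrier := H\<rparr>\<^esub> n)"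
    using Hg.cyclic_group cyc by auto
  moreover have "(\<lambda>n::int. g [^]\<^bsub>G\<lparr>carrier := H\<rparr>\<^esub> n) = (\<lambda>n. g [^] n)"
    using int_pow_consistent[OF H g(1)] by simp
  ultimately show ?thesis using that subgroup.mem_carrier[OF H] by metis
qed

section \<open>Fixed-point-free automorphisms without invariant subgroups\<close>

lemma (in group_action) card_orbit_eq_one_or_dvd:
  assumes q: "Factorial_Ring.prime (q::nat)" and ord: "order G = q ^ a" and x: "x \<in> E"
  shows "card (orbit G \<phi> x) = 1 \<or> q dvd card (orbit G \<phi> x)"
proof -
  have "card (orbit G \<phi> x) dvd q ^ a" using orbit_stabilizer_theorem[OF x] ord by (metis dvd_triv_left)
  then obtain j where "card (orbit G \<phi> x) = q ^ j" using divides_primepow_nat[OF q] by auto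
  then show ?thesis using q by (cases j) auto
qed

lemma (in group_action) card_mod_eq_card_fixed_points:
  assumes fin: "finite E" and q: "Factorial_Ring.prime (q::nat)" and ord: "order G = q ^ a"
  shows "card E mod q = card {x \<in> E. \<forall>g\<in>carrier G. \<phi> g x = x} mod q"
proof -
  interpret G: group G using group_hom group_hom.axioms(1) by auto
  define F where "F = {x \<in> E. \<forall>g\<in>carrier G. \<phi> g x = x}"
  define Orb where "Orb = orbits G E \<phi>"
  define Orb1 where "Orb1 = {Ob \<in> Orb. card Ob = 1}"
  have fin_Orb: "finite Orb" unfolding Orb_def orbits_def using fin by auto
  have orbit_card: "card Ob = 1 \<or> q dvd card Ob" if "Ob \<in> Orb" for Ob
    using that card_orbit_eq_one_or_dvd[OF q ord] unfolding Orb_def orbits_def by blast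
  have "card E = (\<Sum>Ob\<in>Orb. card Ob)"
    using disjoint_sum[OF fin, of "\<lambda>_. 1::nat"] unfolding Orb_def by simp
  also have "\<dots> = (\<Sum>Ob\<in>Orb1. card Ob) + (\<Sum>Ob\<in>Orb - Orb1. card Ob)"
    using sum.subset_diff[OF _ fin_Orb, of Orb1 card] unfolding Orb1_def by (simp add: add.commute)
  also have "(\<Sum>Ob\<in>Orb1. card Ob) = card Orb1" unfolding Orb1_def by simp
  finally have "card E = card Orb1 + (\<Sum>Ob\<in>Orb - Orb1. card Ob)" .
  moreover have "q dvd (\<Sum>Ob\<in>Orb - Orb1. card Ob)"
    by (rule dvd_sum) (use orbit_card in \<open>auto simp: Orb1_def\<close>)
  moreover have "bij_betw (\<lambda>x. {x}) F Orb1"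
  proof (rule bij_betwI')
    show "{x} \<in> Orb1" if "x \<in> F" for x
    proof -
      have "orbit G \<phi> x = {x}" using that G.one_closed unfolding orbit_def F_def by force
      then show ?thesis using that unfolding Orb1_def Orb_def orbits_def F_def by force
    qed
    show "\<exists>x\<in>F. Ob = {x}" if Ob: "Ob \<in> Orb1" for Ob
    proof -
      obtain x where x: "x \<in> E" "Ob = orbit G \<phi> x"
        using Ob unfolding Orb1_def Orb_def orbits_def by blast
      have "Ob = {x}" using orbit_refl[OF x(1)] Ob x(2) unfolding Orb1_def
        by (metis (mono_tags, lifting) card_1_singletonE mem_Collect_eq singletonD)
      then have "x \<in> F" unfolding F_def using x unfolding orbit_def by auto
      then show ?thesis using \<open>Ob = {x}\<close> by blast
    qed
  qed auto
  ultimately show ?thesis unfolding F_def[symmetric] using bij_betw_same_card by fastforce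
qed

lemma (in group) right_mult_inv_action_on_rcosets:
  assumes P: "subgroup P G" and Q: "subgroup Q G"
  shows "group_action (G\<lparr>carrier := Q\<rparr>) (rcosets P) (\<lambda>r. \<lambda>c\<in>rcosets P. c #> inv r)"
    (is "group_action ?Q ?E ?\<phi>")
proof -
  have PS: "P \<subseteq> carrier G" and QS: "Q \<subseteq> carrier G" using P Q subgroup.subset by auto
  have cS: "c \<subseteq> carrier G" if "c \<in> ?E" for c
    using that subgroup.rcosets_carrier[OF P is_group] by auto
  have "?\<phi> r \<in> Bij ?E" if "r \<in> Q" for r
    using bij_betw_rcosets_mult[OF PS, of "inv r"] that QS unfolding Bij_def by auto
  moreover have "?\<phi> (x \<otimes> y) = compose ?E (?\<phi> x) (?\<phi> y)" if "x \<in> Q" "y \<in> Q" for x y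
  proof
    fix c
    have x: "x \<in> carrier G" and y: "y \<in> carrier G" using that QS by auto
    show "?\<phi> (x \<otimes> y) c = compose ?E (?\<phi> x) (?\<phi> y) c"
      using x y coset_mult_assoc[OF cS] rcosets_mult_closed[OF PS]
      by (cases "c \<in> ?E") (simp_all add: compose_def inv_mult_group)
  qed
  ultimately have "?\<phi> \<in> hom ?Q (BijGroup ?E)"
    by (intro homI) (auto simp: BijGroup_def)
  then show ?thesis
    unfolding group_action_def
    by (intro group_hom.intro subgroup_imp_group[OF Q] group_BijGroup) (simp add: group_hom_axioms_def)
qed

lemma (in group) sylow_subgroups_conjugate:
  assumes fin: "finite (carrier G)" and q: "Factorial_Ring.prime (q::nat)"
    and ord: "order G = q ^ a * m" and nd: "\<not> q dvd m"
    and P: "subgroup P G" "card P = q ^ a" and Q: "subgroup Q G" "card Q = q ^ a"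
  shows "\<exists>x\<in>carrier G. P = (\<lambda>r. x \<otimes> r \<otimes> inv x) ` Q"
proof -
  interpret act: group_action "G\<lparr>carrier := Q\<rparr>" "rcosets P" "\<lambda>r. \<lambda>c\<in>rcosets P. c #> inv r"
    using right_mult_inv_action_on_rcosets[OF P(1) Q(1)] .
  have PS: "P \<subseteq> carrier G" and QS: "Q \<subseteq> carrier G" using P Q subgroup.subset by auto
  have "card (rcosets P) * card P = order G" using lagrange[OF P(1)] .
  then have "card (rcosets P) = m" using ord P(2) q by (simp add: prime_gt_0_nat)
  moreover have "finite (rcosets P)" unfolding RCOSETS_def using fin by auto
  moreover have "{c \<in> rcosets P. \<forall>r\<in>Q. (\<lambda>c\<in>rcosets P. c #> inv r) c = c}
      = {c \<in> rcosets P. \<forall>r\<in>Q. c #> inv r = c}" by auto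
  ultimately have "m mod q = card {c \<in> rcosets P. \<forall>r\<in>Q. c #> inv r = c} mod q"
    using act.card_mod_eq_card_fixed_points[of q a] q Q(2) by (simp add: order_def)
  then have "{c \<in> rcosets P. \<forall>r\<in>Q. c #> inv r = c} \<noteq> {}"
    using nd by (metis card.empty dvd_eq_mod_eq_0 mod_0)
  then obtain x where x: "x \<in> carrier G" and fixed: "\<forall>r\<in>Q. P #> x #> inv r = P #> x"
    unfolding RCOSETS_def by auto
  have "x \<otimes> r \<otimes> inv x \<in> P" if r: "r \<in> Q" for r
  proof -
    have rc: "r \<in> carrier G" using r QS by auto
    have "P #> (x \<otimes> inv r) = P #> x" using fixed r coset_mult_assoc[OF PS x, of "inv r"] rc by simp
    then have "inv (x \<otimes> inv r \<otimes> inv x) \<in> P"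
      using rcos_eq_iff[OF P(1)] x rc subgroup.m_inv_closed[OF P(1)] by simp
    then show ?thesis using x rc by (simp add: inv_mult_group m_assoc)
  qed
  then have "(\<lambda>r. x \<otimes> r \<otimes> inv x) ` Q \<subseteq> P" by auto
  moreover have "card ((\<lambda>r. x \<otimes> r \<otimes> inv x) ` Q) = card P" using card_conj_image x QS P Q by simp
  ultimately have "(\<lambda>r. x \<otimes> r \<otimes> inv x) ` Q = P"
    using card_subset_eq[OF finite_subset[OF PS fin]] by blast
  then show ?thesis using x by blast
qed

lemma (in group) prime_power_center_of_nontrivial:
  assumes fin: "finite (carrier G)" and q: "Factorial_Ring.prime (q::nat)"
    and ord: "order G = q ^ a" and a: "a > 0"
  shows "center_of G \<noteq> {\<one>}"
proof -
  have "center_of G = {x \<in> carrier G. \<forall>g\<in>carrier G. (\<lambda>h\<in>carrier G. g \<otimes> h \<otimes> inv g) x = x}"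
    using center_of_conj by (auto simp: center_of_def m_assoc[symmetric] inv_solve_right')
  then have "card (carrier G) mod q = card (center_of G) mod q"
    using group_action.card_mod_eq_card_fixed_points[OF action_by_conjugation fin q ord] by simp
  moreover have "q dvd card (carrier G)" using ord a unfolding order_def by (simp add: dvd_power)
  ultimately have "q dvd card (center_of G)" by (simp add: mod_eq_0_iff_dvd[symmetric])
  then show ?thesis using q by (auto simp: prime_nat_iff)
qed

lemma (in group) fixed_point_free_twist_surj:
  assumes fin: "finite (carrier G)" and hom: "\<alpha> \<in> hom G G"
    and fpf: "\<And>x. x \<in> carrier G \<Longrightarrow> \<alpha> x = x \<Longrightarrow> x = \<one>"
  shows "(\<lambda>x. \<alpha> x \<otimes> inv x) ` carrier G = carrier G"
proof -
  interpret \<alpha>: group_hom G G \<alpha> using hom by (simp add: group_hom.intro group_hom_axioms.intro is_group)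
  have "inj_on (\<lambda>x. \<alpha> x \<otimes> inv x) (carrier G)"
  proof (rule inj_onI)
    fix x y assume x: "x \<in> carrier G" and y: "y \<in> carrier G" and e: "\<alpha> x \<otimes> inv x = \<alpha> y \<otimes> inv y"
    have "inv (\<alpha> y) \<otimes> (\<alpha> x \<otimes> inv x) \<otimes> x = inv (\<alpha> y) \<otimes> (\<alpha> y \<otimes> inv y) \<otimes> x"
      using e by simp
    then have "\<alpha> (inv y \<otimes> x) = inv y \<otimes> x" using x y by (simp add: m_assoc)
    then have "inv y \<otimes> x = \<one>" using fpf x y by simp
    then have "y \<otimes> (inv y \<otimes> x) = y \<otimes> \<one>" by simp
    then show "x = y" using x y by simp
  qed
  moreover have "(\<lambda>x. \<alpha> x \<otimes> inv x) ` carrier G \<subseteq> carrier G" by auto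
  ultimately show ?thesis using endo_inj_surj fin by blast
qed

lemma (in group) aut_image_center_of:
  assumes hom: "\<alpha> \<in> hom G G" and bij: "bij_betw \<alpha> (carrier G) (carrier G)"
  shows "\<alpha> ` center_of G = center_of G"
proof -
  interpret \<alpha>: group_hom G G \<alpha> using hom by (simp add: group_hom.intro group_hom_axioms.intro is_group)
  have inj: "inj_on \<alpha> (carrier G)" and surj: "\<alpha> ` carrier G = carrier G"
    using bij unfolding bij_betw_def by auto
  have iff: "\<alpha> z \<in> center_of G \<longleftrightarrow> z \<in> center_of G" if z: "z \<in> carrier G" for z
  proof -
    have "(\<forall>y\<in>carrier G. \<alpha> z \<otimes> y = y \<otimes> \<alpha> z) \<longleftrightarrow> (\<forall>y\<in>\<alpha> ` carrier G. \<alpha> z \<otimes> y = y \<otimes> \<alpha> z)"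
      using surj by simp
    also have "\<dots> \<longleftrightarrow> (\<forall>y\<in>carrier G. z \<otimes> y = y \<otimes> z)"
      using z inj_onD[OF inj] by (auto simp flip: \<alpha>.hom_mult)
    finally show ?thesis using z unfolding center_of_def by auto
  qed
  show ?thesis
  proof
    show "\<alpha> ` center_of G \<subseteq> center_of G" using iff[OF center_of_carrier] by blast
    show "center_of G \<subseteq> \<alpha> ` center_of G"
    proof
      fix z assume z: "z \<in> center_of G"
      then obtain w where "w \<in> carrier G" "z = \<alpha> w" using surj center_of_carrier by (metis imageE)
      then show "z \<in> \<alpha> ` center_of G" using iff z by auto
    qed
  qed
qed

lemma (in group) aut_invariant_sylow_subgroup:
  assumes fin: "finite (carrier G)" and hom: "\<alpha> \<in> hom G G"
    and bij: "bij_betw \<alpha> (carrier G) (carrier G)"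
    and fpf: "\<And>x. x \<in> carrier G \<Longrightarrow> \<alpha> x = x \<Longrightarrow> x = \<one>"
    and q: "Factorial_Ring.prime (q::nat)" and ord: "order G = q ^ a * m" and nd: "\<not> q dvd m"
  shows "\<exists>Q. subgroup Q G \<and> card Q = q ^ a \<and> \<alpha> ` Q = Q"
proof -
  interpret \<alpha>: group_hom G G \<alpha> using hom by (simp add: group_hom.intro group_hom_axioms.intro is_group)
  have inj: "inj_on \<alpha> (carrier G)" using bij bij_betw_def by auto
  obtain P where P: "subgroup P G" "card P = q ^ a" using sylow_thm[OF q is_group ord fin] by auto
  have PS: "P \<subseteq> carrier G" using P subgroup.subset by auto
  have "subgroup (\<alpha> ` P) G" "card (\<alpha> ` P) = q ^ a"
    using \<alpha>.subgroup_img_is_subgroup P card_image[OF inj_on_subset[OF inj PS]] by auto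
  then obtain k where k: "k \<in> carrier G" "\<alpha> ` P = (\<lambda>r. k \<otimes> r \<otimes> inv k) ` P"
    using sylow_subgroups_conjugate[OF fin q ord nd _ _ P] by blast
  \<comment> \<open>Writing the conjugator as \<open>k = \<alpha> x \<otimes> inv x\<close> makes \<open>inv x \<otimes> P \<otimes> x\<close> invariant.\<close>
  obtain x where x: "x \<in> carrier G" "k = \<alpha> x \<otimes> inv x"
    using k(1) fixed_point_free_twist_surj[OF fin hom fpf] by blast
  define Q where "Q = (\<lambda>r. inv x \<otimes> r \<otimes> inv (inv x)) ` P"
  have "\<alpha> ` Q = (\<lambda>s. inv (\<alpha> x) \<otimes> s \<otimes> \<alpha> x) ` (\<alpha> ` P)"
    unfolding Q_def using x PS by (auto simp: image_image intro!: image_cong)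
  also have "\<dots> = Q"
    unfolding k(2) Q_def image_image using x PS by (intro image_cong) (auto simp: m_assoc inv_mult_group)
  finally have "\<alpha> ` Q = Q" .
  moreover have "subgroup Q G" unfolding Q_def by (rule subgroup_conj_image[OF P(1)]) (use x in simp)
  moreover have "card Q = q ^ a" unfolding Q_def using card_conj_image PS P(2) x by simp
  ultimately show ?thesis by blast
qed

lemma (in group) center_of_eq_carrier_of_fixed_point_free_irreducible_aut:
  assumes fin: "finite (carrier G)" and hom: "\<alpha> \<in> hom G G"
    and bij: "bij_betw \<alpha> (carrier G) (carrier G)"
    and fpf: "\<And>x. x \<in> carrier G \<Longrightarrow> \<alpha> x = x \<Longrightarrow> x = \<one>"
    and irreducible: "\<And>L. subgroup L G \<Longrightarrow> \<alpha> ` L = L \<Longrightarrow> L = {\<one>} \<or> L = carrier G"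
  shows "center_of G = carrier G"
proof (cases "order G = 1")
  case True
  then have "carrier G = {\<one>}" unfolding order_def by (metis card_1_singletonE one_closed singletonD)
  then show ?thesis using subgroup.subset[OF subgroup_center_of] subgroup.one_closed[OF subgroup_center_of]
    by auto
next
  case False
  obtain q where q: "Factorial_Ring.prime (q::nat)" "q dvd order G" using prime_factor_nat[OF False] by blast
  have o0: "order G \<noteq> 0" using fin order_gt_0_iff_finite by simp
  define a where "a = multiplicity q (order G)"
  define m where "m = order G div q ^ a"
  have ord: "order G = q ^ a * m" unfolding m_def a_def by (metis dvd_mult_div_cancel multiplicity_dvd)
  have nd: "\<not> q dvd m" unfolding m_def a_def
    by (rule multiplicity_decompose) (use o0 q(1) not_prime_1 in auto)
  have a0: "a > 0" unfolding a_def using q o0 not_prime_1 by (subst multiplicity_gt_zero_iff) auto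
  obtain Q where Q: "subgroup Q G" "card Q = q ^ a" "\<alpha> ` Q = Q"
    using aut_invariant_sylow_subgroup[OF fin hom bij fpf q(1) ord nd] by blast
  have "q ^ a > 1" using one_less_power[OF prime_gt_1_nat[OF q(1)] a0] .
  then have "Q \<noteq> {\<one>}" using Q(2) by auto
  then have "order G = q ^ a" using irreducible[OF Q(1,3)] Q(2) unfolding order_def by simp
  then have "center_of G \<noteq> {\<one>}" using prime_power_center_of_nontrivial[OF fin q(1) _ a0] by blast
  then show ?thesis using irreducible[OF subgroup_center_of aut_image_center_of[OF hom bij]] by blast
qed

section \<open>A non-normal cyclic maximal subgroup\<close>

locale cyclic_maximal_nonnormal = group G for G (structure) +
  fixes H and g
  assumes finite_carrier: "finite (carrier G)"
    and maximal: "maximal_subgroup H G"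
    and generator: "g \<in> carrier G" "H = range (\<lambda>n::int. g [^] n)"
    and not_normal: "\<not> H \<lhd> G"
begin

lemma H_subgroup: "subgroup H G"
  using maximal unfolding maximal_subgroup_def by blast

lemma H_carrier: "h \<in> H \<Longrightarrow> h \<in> carrier G"
  using subgroup.mem_carrier[OF H_subgroup] .

lemma H_subset: "H \<subseteq> carrier G"
  using H_carrier by auto

lemma H_cases:
  assumes "h \<in> H" obtains k :: int where "h = g [^] k"
  using assms generator(2) by auto

lemma pow_in_H: "g [^] (k::int) \<in> H"
  using generator(2) by auto

lemma g_in_H: "g \<in> H"
  using pow_in_H[of 1] generator(1) by simp

lemma H_commute: "a \<in> H \<Longrightarrow> b \<in> H \<Longrightarrow> a \<otimes> b = b \<otimes> a"
  using generator(1) by (elim H_cases) (simp add: int_pow_mult[symmetric] add.commute)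

lemma H_conj_closed: "y \<in> H \<Longrightarrow> h \<in> H \<Longrightarrow> y \<otimes> h \<otimes> inv y \<in> H"
  using H_subgroup by (simp add: subgroup.m_closed subgroup.m_inv_closed)

lemma normalizer_H: "normalizer G H = H"
proof -
  note HS = H_subset
  have "H \<subseteq> normalizer G H"
    using mem_normalizer_iff[OF HS] conj_image_eq_of_subset[OF finite_subset[OF HS finite_carrier] HS]
      H_carrier H_conj_closed by auto
  moreover have "normalizer G H \<noteq> carrier G"
  proof
    assume "normalizer G H = carrier G"
    then have "H \<lhd> G" using normal_inv_iff H_subgroup mem_normalizer_iff[OF HS] by blast
    then show False using not_normal by contradiction
  qed
  ultimately show ?thesis
    using maximal normalizer_imp_subgroup[OF HS] unfolding maximal_subgroup_def by blast
qed

lemma mem_H_of_conj_closed: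
  assumes "x \<in> carrier G" "\<And>h. h \<in> H \<Longrightarrow> x \<otimes> h \<otimes> inv x \<in> H"
  shows "x \<in> H"
proof -
  have "x \<in> normalizer G H"
    using assms conj_image_eq_of_subset[of H x] finite_subset[OF _ finite_carrier] H_carrier
      mem_normalizer_iff by (simp add: subset_iff)
  then show ?thesis using normalizer_H by simp
qed

lemma mem_center_of_of_conj_mem_H:
  assumes x: "x \<in> carrier G" "x \<notin> H" and c: "c \<in> H" "inv x \<otimes> c \<otimes> x \<in> H"
  shows "c \<in> center_of G"
proof -
  define d where "d = inv x \<otimes> c \<otimes> x"
  have cc: "c \<in> carrier G" and dc: "d \<in> carrier G" using c H_carrier d_def by auto
  have cd: "c = x \<otimes> d \<otimes> inv x" unfolding d_def using x cc by (simp add: m_assoc)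
  have "x \<otimes> h \<otimes> inv x \<in> centralizer G c" if h: "h \<in> H" for h
  proof -
    have "(x \<otimes> h \<otimes> inv x) \<otimes> (x \<otimes> d \<otimes> inv x) = x \<otimes> (h \<otimes> d) \<otimes> inv x"
      using x dc H_carrier[OF h] by (simp add: m_assoc)
    also have "\<dots> = (x \<otimes> d \<otimes> inv x) \<otimes> (x \<otimes> h \<otimes> inv x)"
      using H_commute[OF h] c(2) x dc H_carrier[OF h] by (simp add: d_def[symmetric] m_assoc)
    finally show ?thesis using x H_carrier[OF h] cd unfolding centralizer_def by auto
  qed
  then have "centralizer G c \<noteq> H" using mem_H_of_conj_closed x by blast
  moreover have "H \<subseteq> centralizer G c" using H_commute c(1) H_carrier unfolding centralizer_def by auto
  ultimately have "centralizer G c = carrier G"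
    using maximal subgroup_centralizer[OF cc] unfolding maximal_subgroup_def by blast
  then have "c \<otimes> y = y \<otimes> c" if "y \<in> carrier G" for y
    using that unfolding centralizer_def by (metis (mono_tags, lifting) mem_Collect_eq)
  then show ?thesis using cc unfolding center_of_def by auto
qed

lemma center_of_subset_H: "center_of G \<subseteq> H"
proof
  fix z assume z: "z \<in> center_of G"
  show "z \<in> H"
    using mem_H_of_conj_closed[OF center_of_carrier[OF z]] conj_by_center_of[OF z] H_carrier by simp
qed

lemma g_notin_center_of: "g \<notin> center_of G"
proof
  assume "g \<in> center_of G"
  then have "H \<subseteq> center_of G"
    using subgroup_int_pow_closed[OF subgroup_center_of] generator(2) by auto
  then have "\<forall>x\<in>carrier G. \<forall>h\<in>H. x \<otimes> h \<otimes> inv x \<in> H"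
    using center_of_conj by (simp add: subset_iff)
  then have "H \<lhd> G" using normal_inv_iff H_subgroup by blast
  then show False using not_normal by contradiction
qed

abbreviation H_grp where "H_grp \<equiv> G\<lparr>carrier := H\<rparr>"

lemma H_comm_group: "comm_group H_grp"
  using group.group_comm_groupI[OF subgroup_imp_group[OF H_subgroup]] H_commute by simp

lemma rcosets_carrier: "c \<in> rcosets H \<Longrightarrow> c \<subseteq> carrier G"
  using subgroup.rcosets_carrier[OF H_subgroup is_group] by auto

lemma rcosets_mult: "c \<in> rcosets H \<Longrightarrow> y \<in> carrier G \<Longrightarrow> c #> y \<in> rcosets H"
  using rcosets_mult_closed H_carrier by blast

lemma finite_rcosets: "finite (rcosets H)"
  using finite_carrier unfolding RCOSETS_def by auto

text \<open>The representatives of the cosets in one \<open>\<langle>g\<rangle>\<close>-orbit are chosen to differ by powers of \<open>g\<close>;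
  this is what makes the transfer of \<open>g\<close> equal to \<open>g\<close> times a central element.\<close>

definition g_orbit :: "'a set \<Rightarrow> 'a set set" where
  "g_orbit c = {c #> g [^] (k::int) | k. True}"

definition orbit_base :: "'a set \<Rightarrow> 'a" where
  "orbit_base c = (SOME r. r \<in> carrier G \<and> H #> r \<in> g_orbit c)"

definition orbit_index :: "'a set \<Rightarrow> int" where
  "orbit_index c = (SOME k. c = H #> (orbit_base c \<otimes> g [^] k))"

definition transversal :: "'a set \<Rightarrow> 'a" where
  "transversal c = orbit_base c \<otimes> g [^] orbit_index c"

definition transfer_factor :: "'a \<Rightarrow> 'a set \<Rightarrow> 'a" where
  "transfer_factor y c = transversal c \<otimes> y \<otimes> inv (transversal (c #> y))"

definition transfer :: "'a \<Rightarrow> 'a" where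
  "transfer y = finprod H_grp (transfer_factor y) (rcosets H)"

lemma g_orbit_mult_g: "c \<subseteq> carrier G \<Longrightarrow> g_orbit (c #> g) = g_orbit c"
proof -
  assume c: "c \<subseteq> carrier G"
  have shift: "c #> g #> g [^] k = c #> g [^] (1 + k)" for k :: int
    using coset_mult_assoc[OF c generator(1), of "g [^] k"] generator(1) by (simp add: int_pow_mult)
  then have "c #> g [^] k = c #> g #> g [^] (k - 1)" for k :: int by simp
  then show ?thesis using shift unfolding g_orbit_def by blast
qed

lemma orbit_base_mult_g: "c \<in> rcosets H \<Longrightarrow> orbit_base (c #> g) = orbit_base c"
  unfolding orbit_base_def using g_orbit_mult_g[OF rcosets_carrier] by simp

lemma orbit_base_carrier: "c \<in> rcosets H \<Longrightarrow> orbit_base c \<in> carrier G"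
  and orbit_base_g_orbit: "c \<in> rcosets H \<Longrightarrow> H #> orbit_base c \<in> g_orbit c"
proof -
  assume c: "c \<in> rcosets H"
  then obtain x where "x \<in> carrier G" "c = H #> x" unfolding RCOSETS_def by auto
  moreover have "c #> g [^] (0::int) = c" using rcosets_carrier[OF c] by simp
  ultimately have "\<exists>r. r \<in> carrier G \<and> H #> r \<in> g_orbit c"
    unfolding g_orbit_def by (metis (mono_tags) mem_Collect_eq)
  then have "orbit_base c \<in> carrier G \<and> H #> orbit_base c \<in> g_orbit c"
    unfolding orbit_base_def by (rule someI_ex)
  then show "orbit_base c \<in> carrier G" "H #> orbit_base c \<in> g_orbit c" by auto
qed

lemma transversal_carrier: "c \<in> rcosets H \<Longrightarrow> transversal c \<in> carrier G"
  unfolding transversal_def using orbit_base_carrier generator(1) by simp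

lemma rcos_transversal: "c \<in> rcosets H \<Longrightarrow> c = H #> transversal c"
proof -
  assume c: "c \<in> rcosets H"
  obtain k where k: "H #> orbit_base c = c #> g [^] (k::int)"
    using orbit_base_g_orbit[OF c] unfolding g_orbit_def by blast
  have "H #> (orbit_base c \<otimes> g [^] (-k)) = c #> (g [^] k \<otimes> g [^] (-k))"
    using k orbit_base_carrier[OF c] generator(1) rcosets_carrier[OF c] H_subset
    by (simp add: coset_mult_assoc[symmetric])
  then have "c = H #> (orbit_base c \<otimes> g [^] (-k))"
    using rcosets_carrier[OF c] generator(1) by (simp add: int_pow_mult[symmetric])
  then have "c = H #> (orbit_base c \<otimes> g [^] orbit_index c)"
    unfolding orbit_index_def by (rule someI)
  then show ?thesis unfolding transversal_def .
qed

lemma transfer_factor_in_H: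
  assumes c: "c \<in> rcosets H" and y: "y \<in> carrier G"
  shows "transfer_factor y c \<in> H"
proof -
  have "H #> (transversal c \<otimes> y) = H #> transversal c #> y"
    using coset_mult_assoc[OF H_subset transversal_carrier[OF c] y] by simp
  also have "\<dots> = H #> transversal (c #> y)"
    using rcos_transversal[OF c] rcos_transversal[OF rcosets_mult[OF c y]] by simp
  finally have "H #> (transversal c \<otimes> y) = H #> transversal (c #> y)" .
  then show ?thesis unfolding transfer_factor_def
    using rcos_eq_iff[OF H_subgroup] transversal_carrier c y rcosets_mult by simp
qed

lemma transfer_factor_mult:
  assumes c: "c \<in> rcosets H" and x: "x \<in> carrier G" and y: "y \<in> carrier G"
  shows "transfer_factor (x \<otimes> y) c = transfer_factor x c \<otimes> transfer_factor y (c #> x)"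
proof -
  have "c #> (x \<otimes> y) = c #> x #> y" using coset_mult_assoc[OF rcosets_carrier[OF c] x y] by simp
  then show ?thesis unfolding transfer_factor_def
    using transversal_carrier c x y rcosets_mult by (simp add: m_assoc)
qed

lemma transfer_factor_Pi:
  "y \<in> carrier G \<Longrightarrow> transfer_factor y \<in> rcosets H \<rightarrow> carrier H_grp"
  using transfer_factor_in_H by auto

lemma transfer_in_H: "y \<in> carrier G \<Longrightarrow> transfer y \<in> H"
  using comm_group.axioms(1)[OF H_comm_group] comm_monoid.finprod_closed[OF _ transfer_factor_Pi]
  unfolding transfer_def by fastforce

lemma transfer_mult:
  assumes x: "x \<in> carrier G" and y: "y \<in> carrier G"
  shows "transfer (x \<otimes> y) = transfer x \<otimes> transfer y"
proof -
  interpret Hc: comm_group H_grp using H_comm_group .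
  have bij: "bij_betw (\<lambda>c. c #> x) (rcosets H) (rcosets H)"
    using bij_betw_rcosets_mult[OF H_subset x] .
  have shifted: "(\<lambda>c. transfer_factor y (c #> x)) \<in> rcosets H \<rightarrow> carrier H_grp"
    using transfer_factor_in_H rcosets_mult x y by auto
  have "transfer (x \<otimes> y)
      = finprod H_grp (\<lambda>c. transfer_factor x c \<otimes>\<^bsub>H_grp\<^esub> transfer_factor y (c #> x)) (rcosets H)"
    unfolding transfer_def
    using transfer_factor_mult x y transfer_factor_in_H rcosets_mult subgroup.m_closed[OF H_subgroup]
    by (intro Hc.finprod_cong') auto
  also have "\<dots> = transfer x \<otimes>\<^bsub>H_grp\<^esub> finprod H_grp (\<lambda>c. transfer_factor y (c #> x)) (rcosets H)"
    unfolding transfer_def using Hc.finprod_multf[OF transfer_factor_Pi[OF x] shifted] .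
  also have "finprod H_grp (\<lambda>c. transfer_factor y (c #> x)) (rcosets H) = transfer y"
    unfolding transfer_def
    using Hc.finprod_reindex[of "transfer_factor y" "\<lambda>c. c #> x" "rcosets H"] bij transfer_factor_Pi[OF y]
    by (simp add: bij_betw_def)
  finally show ?thesis by simp
qed

lemma transfer_group_hom: "group_hom G G transfer"
  using transfer_mult transfer_in_H H_carrier
  by (intro group_hom.intro is_group group_hom_axioms.intro homI) auto

lemma finprod_H_center_of:
  assumes "finite A" "\<And>a. a \<in> A \<Longrightarrow> f a \<in> center_of G"
  shows "finprod H_grp f A \<in> center_of G"
  using assms
proof (induction A rule: finite_induct)
  interpret Hc: comm_group H_grp using H_comm_group .
  case empty
  show ?case using subgroup.one_closed[OF subgroup_center_of] by simp
next
  interpret Hc: comm_group H_grp using H_comm_group .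
  case (insert a A)
  have "f \<in> A \<rightarrow> carrier H_grp" "f a \<in> carrier H_grp" using insert.prems center_of_subset_H by auto
  then have "finprod H_grp f (insert a A) = f a \<otimes> finprod H_grp f A"
    using Hc.finprod_insert[OF insert.hyps(1,2)] by simp
  then show ?case using insert subgroup.m_closed[OF subgroup_center_of] by simp
qed

lemma transfer_factor_g_H: "transfer_factor g H = g"
proof -
  have HH: "H \<in> rcosets H" using rcosetsI[OF H_subset one_closed] H_subset by simp
  have t: "transversal H \<in> carrier G" "H = H #> transversal H"
    using transversal_carrier[OF HH] rcos_transversal[OF HH] by auto
  then have "transversal H \<in> H"
    using rcos_eq_iff[OF H_subgroup t(1) one_closed] H_subset by simp
  moreover have "H #> g = H" using subgroup.rcos_const[OF H_subgroup is_group g_in_H] .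
  ultimately show ?thesis unfolding transfer_factor_def
    using H_commute[OF _ g_in_H] t(1) generator(1) by (simp add: m_assoc)
qed

lemma transfer_factor_g_center_of:
  assumes c: "c \<in> rcosets H" and cH: "c \<noteq> H"
  shows "transfer_factor g c \<in> center_of G"
proof -
  define r where "r = orbit_base c"
  define w where "w = g [^] orbit_index c \<otimes> g \<otimes> inv (g [^] orbit_index (c #> g))"
  have rc: "r \<in> carrier G" unfolding r_def using orbit_base_carrier[OF c] .
  have wH: "w \<in> H" unfolding w_def using pow_in_H g_in_H H_subgroup
    by (simp add: subgroup.m_closed subgroup.m_inv_closed)
  have tw: "transfer_factor g c = r \<otimes> w \<otimes> inv r"
    unfolding transfer_factor_def transversal_def w_def orbit_base_mult_g[OF c] r_def[symmetric]
    using rc generator(1) by (simp add: m_assoc inv_mult_group)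
  have "r \<notin> H"
  proof
    assume "r \<in> H"
    then have "transversal c \<in> H" unfolding transversal_def r_def[symmetric]
      using pow_in_H H_subgroup by (simp add: subgroup.m_closed)
    then show False using rcos_transversal[OF c] cH subgroup.rcos_const[OF H_subgroup is_group] by simp
  qed
  then have "inv r \<notin> H" using rc H_subgroup by (metis inv_inv subgroup.m_inv_closed)
  moreover have "inv (inv r) \<otimes> w \<otimes> inv r \<in> H" using tw transfer_factor_in_H[OF c generator(1)] rc by simp
  ultimately have "w \<in> center_of G" using mem_center_of_of_conj_mem_H[OF inv_closed[OF rc] _ wH] by blast
  moreover have "r \<otimes> w \<otimes> inv r = w" using conj_by_center_of rc calculation center_of_conj by simp
  ultimately show ?thesis using tw by simp
qed

definition transfer_excess :: 'a where
  "transfer_excess = finprod H_grp (transfer_factor g) (rcosets H - {H})"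

lemma transfer_excess_center_of: "transfer_excess \<in> center_of G"
  unfolding transfer_excess_def using finite_rcosets transfer_factor_g_center_of
  by (intro finprod_H_center_of) auto

lemma transfer_g: "transfer g = g \<otimes> transfer_excess"
proof -
  interpret Hc: comm_group H_grp using H_comm_group .
  have "H \<in> rcosets H" using rcosetsI[OF H_subset one_closed] H_subset by simp
  then have "rcosets H = insert H (rcosets H - {H})" by auto
  moreover have "transfer_factor g \<in> rcosets H - {H} \<rightarrow> carrier H_grp" "transfer_factor g H \<in> carrier H_grp"
    using transfer_factor_Pi[OF generator(1)] transfer_factor_g_H g_in_H by auto
  moreover have "finprod H_grp (transfer_factor g) (insert H (rcosets H - {H}))
      = transfer_factor g H \<otimes>\<^bsub>H_grp\<^esub> transfer_excess"
    unfolding transfer_excess_def using calculation(2,3) finite_rcosets by (intro Hc.finprod_insert) auto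
  ultimately have "transfer g = transfer_factor g H \<otimes> transfer_excess"
    unfolding transfer_def by simp
  then show ?thesis using transfer_factor_g_H by simp
qed

lemma transfer_carrier: "y \<in> carrier G \<Longrightarrow> transfer y \<in> carrier G"
  using transfer_in_H H_carrier by blast

lemma transfer_excess_carrier: "transfer_excess \<in> carrier G"
  using center_of_carrier[OF transfer_excess_center_of] .

lemma transfer_excess_pow_center_of: "transfer_excess [^] (k::int) \<in> center_of G"
  using subgroup_int_pow_closed[OF subgroup_center_of transfer_excess_center_of] .

lemma transfer_g_pow: "transfer (g [^] (k::int)) = g [^] k \<otimes> transfer_excess [^] k"
proof -
  interpret V: group_hom G G transfer using transfer_group_hom .
  show ?thesis
    using V.hom_int_pow[OF generator(1)] transfer_g generator(1) transfer_excess_carrier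
      int_pow_mult_distrib[OF _ generator(1) transfer_excess_carrier]
      center_of_commute[OF transfer_excess_center_of generator(1)] by simp
qed

definition M :: "'a set" where
  "M = {y \<in> carrier G. transfer y \<in> center_of G}"

lemma M_carrier: "m \<in> M \<Longrightarrow> m \<in> carrier G"
  unfolding M_def by simp

lemma subgroup_M: "subgroup M G"
  unfolding M_def by (rule group_hom.subgroup_preimage[OF transfer_group_hom subgroup_center_of])

lemma M_conj_closed:
  assumes x: "x \<in> carrier G" and m: "m \<in> M"
  shows "x \<otimes> m \<otimes> inv x \<in> M"
proof -
  interpret V: group_hom G G transfer using transfer_group_hom .
  have "transfer (x \<otimes> m \<otimes> inv x) = transfer x \<otimes> transfer m \<otimes> inv (transfer x)"
    using x M_carrier[OF m] by simp
  also have "\<dots> = transfer m"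
    using center_of_conj[of "transfer m" "transfer x"] m transfer_carrier[OF x] unfolding M_def by simp
  finally show ?thesis using m x unfolding M_def by simp
qed

lemma center_of_subset_M: "center_of G \<subseteq> M"
proof
  fix z assume z: "z \<in> center_of G"
  then obtain k where k: "z = g [^] (k::int)" using center_of_subset_H H_cases by blast
  have "transfer z = z \<otimes> transfer_excess [^] k" using transfer_g_pow k by simp
  then show "z \<in> M"
    using subgroup.m_closed[OF subgroup_center_of z transfer_excess_pow_center_of] z center_of_carrier
    unfolding M_def by simp
qed

lemma H_inter_M: "H \<inter> M = center_of G"
proof
  show "H \<inter> M \<subseteq> center_of G"
  proof
    fix h assume h: "h \<in> H \<inter> M"
    then obtain k where k: "h = g [^] (k::int)" using H_cases by blast
    have "transfer h \<otimes> inv (transfer_excess [^] k) = h"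
      using transfer_g_pow k generator(1) transfer_excess_carrier by (simp add: m_assoc)
    moreover have "transfer h \<otimes> inv (transfer_excess [^] k) \<in> center_of G"
      using h subgroup.m_closed[OF subgroup_center_of] transfer_excess_pow_center_of
        subgroup.m_inv_closed[OF subgroup_center_of] unfolding M_def by simp
    ultimately show "h \<in> center_of G" by simp
  qed
  show "center_of G \<subseteq> H \<inter> M" using center_of_subset_H center_of_subset_M by blast
qed

lemma commutator_in_M:
  assumes a: "a \<in> carrier G" and b: "b \<in> carrier G"
  shows "a \<otimes> b \<otimes> inv a \<otimes> inv b \<in> M"
proof -
  interpret V: group_hom G G transfer using transfer_group_hom .
  have "transfer (a \<otimes> b \<otimes> inv a \<otimes> inv b)
      = transfer a \<otimes> transfer b \<otimes> inv (transfer a) \<otimes> inv (transfer b)" using a b by simp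
  also have "\<dots> = \<one>"
    using H_commute[OF transfer_in_H[OF a] transfer_in_H[OF b]] transfer_carrier a b by (simp add: m_assoc)
  finally show ?thesis using a b subgroup.one_closed[OF subgroup_center_of] unfolding M_def by simp
qed

abbreviation M_grp where "M_grp \<equiv> G\<lparr>carrier := M\<rparr>"

abbreviation K where "K \<equiv> M_grp Mod center_of G"

lemma normal_center_of_M: "center_of G \<lhd> M_grp"
proof -
  interpret Mg: group M_grp using subgroup_imp_group[OF subgroup_M] .
  have "subgroup (center_of G) M_grp"
    using subgroup_incl[OF subgroup_center_of subgroup_M center_of_subset_M] .
  moreover have "x \<otimes> z \<otimes> inv\<^bsub>M_grp\<^esub> x \<in> center_of G" if "x \<in> M" "z \<in> center_of G" for x z
    using that center_of_conj[OF _ M_carrier] m_inv_consistent[OF subgroup_M] by simp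
  ultimately show ?thesis using Mg.normal_inv_iff by simp
qed

lemma group_K: "group K"
  using normal.factorgroup_is_group[OF normal_center_of_M] .

lemma carrier_K: "carrier K = (\<lambda>m. center_of G #> m) ` M"
  using carrier_FactGroup[of M_grp "center_of G"] by (simp add: r_coset_def)

lemma finite_carrier_K: "finite (carrier K)"
  unfolding carrier_K using finite_subset[OF _ finite_carrier, of M] M_carrier by blast

lemma mult_K: "C \<otimes>\<^bsub>K\<^esub> D = C <#> D"
  by (simp add: set_mult_def)

definition g_conj :: "'a set \<Rightarrow> 'a set" where
  "g_conj C = (\<lambda>m. g \<otimes> m \<otimes> inv g) ` C"

lemma g_conj_rcos:
  assumes m: "m \<in> carrier G"
  shows "g_conj (center_of G #> m) = center_of G #> (g \<otimes> m \<otimes> inv g)"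
proof -
  have "(\<lambda>z. g \<otimes> z \<otimes> inv g) ` center_of G = center_of G"
    using center_of_conj[OF _ generator(1)] by (simp add: image_cong)
  then show ?thesis
    unfolding g_conj_def using coset_hom(2)[OF conj_hom[OF generator(1)] center_of_subset_carrier m] by simp
qed

lemma g_conj_carrier_K: "C \<in> carrier K \<Longrightarrow> g_conj C \<in> carrier K"
  using g_conj_rcos M_conj_closed[OF generator(1)] M_carrier unfolding carrier_K by auto

lemma carrier_K_subset: "C \<in> carrier K \<Longrightarrow> C \<subseteq> carrier G"
  using r_coset_subset_G[OF center_of_subset_carrier M_carrier] unfolding carrier_K by blast

lemma g_conj_hom_K: "g_conj \<in> hom K K"
  using g_conj_carrier_K set_mult_hom[OF conj_hom[OF generator(1)] carrier_K_subset carrier_K_subset]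
  unfolding g_conj_def by (intro homI) (auto simp: mult_K)

lemma g_conj_bij_K: "bij_betw g_conj (carrier K) (carrier K)"
proof -
  have "inj_on g_conj (carrier K)"
    using inj_on_image_eq_iff[OF inj_on_conj[OF generator(1) inv_closed[OF generator(1)]]]
      carrier_K_subset unfolding g_conj_def inj_on_def by (metis (no_types, lifting))
  moreover have "g_conj ` carrier K = carrier K"
    using card_image[OF calculation] g_conj_carrier_K finite_carrier_K by (intro card_subset_eq) auto
  ultimately show ?thesis unfolding bij_betw_def by blast
qed

lemma g_conj_fixed_K:
  assumes C: "C \<in> carrier K" and fixed: "g_conj C = C"
  shows "C = \<one>\<^bsub>K\<^esub>"
proof -
  obtain m where m: "m \<in> M" "C = center_of G #> m" using C unfolding carrier_K by blast
  have mc: "m \<in> carrier G" using M_carrier[OF m(1)] .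
  define z where "z = g \<otimes> m \<otimes> inv g \<otimes> inv m"
  have "center_of G #> (g \<otimes> m \<otimes> inv g) = center_of G #> m" using g_conj_rcos[OF mc] fixed m(2) by simp
  then have z: "z \<in> center_of G" unfolding z_def
    using rcos_eq_iff[OF subgroup_center_of] mc generator(1) by simp
  have "inv m \<otimes> g \<otimes> m = inv m \<otimes> (z \<otimes> m \<otimes> g)"
    unfolding z_def using mc generator(1) by (simp add: m_assoc)
  also have "\<dots> = (inv m \<otimes> z \<otimes> inv (inv m)) \<otimes> g"
    using center_of_carrier[OF z] mc generator(1) by (simp add: m_assoc)
  also have "\<dots> = z \<otimes> g" using center_of_conj[OF z inv_closed[OF mc]] by simp
  finally have "inv m \<otimes> g \<otimes> m \<in> H"
    using center_of_subset_H z g_in_H H_subgroup by (auto intro: subgroup.m_closed)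
  then have "m \<in> H" using mem_center_of_of_conj_mem_H[OF mc _ g_in_H] g_notin_center_of by blast
  then have "m \<in> center_of G" using H_inter_M m(1) by blast
  then show ?thesis using m(2) subgroup.rcos_const[OF subgroup_center_of is_group] by simp
qed

lemma
  assumes L: "subgroup L K"
  shows subgroup_Union_K: "subgroup (\<Union>L) G"
    and Union_K_subset_M: "\<Union>L \<subseteq> M"
    and center_of_subset_Union_K: "center_of G \<subseteq> \<Union>L"
    and rcos_mem_K_iff: "m \<in> M \<Longrightarrow> center_of G #> m \<in> L \<longleftrightarrow> m \<in> \<Union>L"
proof -
  interpret N: normal "center_of G" M_grp using normal_center_of_M .
  have sub: "subgroup (\<Union>L) M_grp" using N.subgroup_Union_FactGroup[OF L] .
  then show "subgroup (\<Union>L) G" using incl_subgroup[OF subgroup_M] by blast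
  show "\<Union>L \<subseteq> M" using subgroup.subset[OF sub] by simp
  show "center_of G \<subseteq> \<Union>L" using subgroup.one_closed[OF L] by auto
  show "m \<in> M \<Longrightarrow> center_of G #> m \<in> L \<longleftrightarrow> m \<in> \<Union>L"
    using N.rcos_mem_iff_mem_Union[OF L] by (simp add: r_coset_def)
qed

lemma H_normalizes_Union_K:
  assumes L: "subgroup L K" and inv: "g_conj ` L = L" and h: "h \<in> H" and l: "l \<in> \<Union>L"
  shows "h \<otimes> l \<otimes> inv h \<in> \<Union>L"
proof -
  have US: "\<Union>L \<subseteq> carrier G" using Union_K_subset_M[OF L] M_carrier by blast
  have "(\<lambda>l. g \<otimes> l \<otimes> inv g) ` \<Union>L = \<Union>(g_conj ` L)" unfolding g_conj_def by blast
  then have "g \<in> normalizer G (\<Union>L)" using mem_normalizer_iff[OF US] inv generator(1) by simp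
  then have "g [^] (k::int) \<in> normalizer G (\<Union>L)" for k
    using subgroup_int_pow_closed[OF normalizer_imp_subgroup[OF US]] by blast
  then have "h \<in> normalizer G (\<Union>L)" using h by (elim H_cases) simp
  then show ?thesis using mem_normalizer_iff[OF US] l by blast
qed

lemma g_conj_irreducible_K:
  assumes L: "subgroup L K" and inv: "g_conj ` L = L"
  shows "L = {\<one>\<^bsub>K\<^esub>} \<or> L = carrier K"
proof -
  let ?N = "\<Union>L"
  have N: "subgroup ?N G" "?N \<subseteq> M" "center_of G \<subseteq> ?N"
    using subgroup_Union_K[OF L] Union_K_subset_M[OF L] center_of_subset_Union_K[OF L] by auto
  have S: "subgroup (?N <#> H) G"
    using subgroup_set_mult_of_normalizes[OF N(1) H_subgroup] H_normalizes_Union_K[OF L inv] by blast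
  note N_NH = subset_set_mult_subgroup(1)[OF N(1) H_subgroup]
    and H_NH = subset_set_mult_subgroup(2)[OF N(1) H_subgroup]
  consider "?N <#> H = H" | "?N <#> H = carrier G"
    using maximal S H_NH unfolding maximal_subgroup_def by blast
  then show ?thesis
  proof cases
    case 1
    have "?N \<subseteq> H \<inter> M" using N_NH N(2) 1 by auto
    then have NZ: "?N \<subseteq> center_of G" using H_inter_M by simp
    have "C = \<one>\<^bsub>K\<^esub>" if C: "C \<in> L" for C
    proof -
      obtain m where m: "m \<in> M" "C = center_of G #> m"
        using subgroup.subset[OF L] C unfolding carrier_K by blast
      then have "m \<in> center_of G" using rcos_mem_K_iff[OF L m(1)] C NZ by blast
      then show ?thesis using m(2) subgroup.rcos_const[OF subgroup_center_of is_group] by simp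
    qed
    then show ?thesis using subgroup.one_closed[OF L] by blast
  next
    case 2
    have "M \<subseteq> ?N"
    proof
      fix m assume m: "m \<in> M"
      then obtain l h where lh: "l \<in> ?N" "h \<in> H" "m = l \<otimes> h"
        using 2 M_carrier unfolding set_mult_def by blast
      have "inv l \<otimes> m \<in> M" using subgroup.m_closed[OF subgroup_M] subgroup.m_inv_closed[OF subgroup_M] lh(1) N(2) m by blast
      moreover have "inv l \<otimes> m = h" using lh subsetD[OF N(2)] M_carrier H_carrier by (simp add: m_assoc[symmetric])
      ultimately have "h \<in> ?N" using lh(2) H_inter_M N(3) by blast
      then show "m \<in> ?N" using lh subgroup.m_closed[OF N(1)] by simp
    qed
    then have "carrier K \<subseteq> L" using rcos_mem_K_iff[OF L] unfolding carrier_K by blast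
    then show ?thesis using subgroup.subset[OF L] by blast
  qed
qed

lemma center_of_K: "center_of K = carrier K"
  using group.center_of_eq_carrier_of_fixed_point_free_irreducible_aut[OF group_K finite_carrier_K
      g_conj_hom_K g_conj_bij_K g_conj_fixed_K g_conj_irreducible_K] by blast

lemma commutator_M_in_center_of:
  assumes a: "a \<in> M" and b: "b \<in> M"
  shows "a \<otimes> b \<otimes> inv a \<otimes> inv b \<in> center_of G"
proof -
  have ac: "a \<in> carrier G" and bc: "b \<in> carrier G" using a b M_carrier by auto
  interpret N: normal "center_of G" M_grp using normal_center_of_M .
  have "center_of G #> a \<in> center_of K" "center_of G #> b \<in> carrier K"
    using a b carrier_K center_of_K by auto
  then have "(center_of G #> a) <#> (center_of G #> b) = (center_of G #> b) <#> (center_of G #> a)"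
    using center_of_commute[of "center_of G #> a" K "center_of G #> b"] by (simp only: mult_K)
  then have "center_of G #> (a \<otimes> b) = center_of G #> (b \<otimes> a)"
    using N.rcos_sum a b by (simp add: r_coset_def set_mult_def)
  then have "(a \<otimes> b) \<otimes> inv (b \<otimes> a) \<in> center_of G" using rcos_eq_iff[OF subgroup_center_of] ac bc by simp
  then show ?thesis using ac bc by (simp add: inv_mult_group m_assoc)
qed

lemma derived_derived_subset_center_of: "derived G (derived G (carrier G)) \<subseteq> center_of G"
proof -
  have "derived G (carrier G) \<subseteq> M"
    using derived_subset_of_commutators[OF subgroup_M] commutator_in_M by blast
  then have "derived G (derived G (carrier G)) \<subseteq> derived G M" by (rule mono_derived)
  also have "\<dots> \<subseteq> center_of G"
    using derived_subset_of_commutators[OF subgroup_center_of] commutator_M_in_center_of by blast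
  finally show ?thesis .
qed

end

theorem proposition2p4:
  fixes G (structure)
  assumes "group G"
    and "finite (carrier G)"
    and "\<exists>H. maximal_subgroup H G \<and> cyclic_group (G\<lparr>carrier := H\<rparr>)"
  shows "solvable G \<and> derived G (derived G (carrier G)) \<subseteq> center_of G"
proof -
  interpret group G using assms(1) .
  obtain H where max: "maximal_subgroup H G" and cyc: "cyclic_group (G\<lparr>carrier := H\<rparr>)"
    using assms(3) by blast
  have H: "subgroup H G" using max unfolding maximal_subgroup_def by blast
  have "derived G (derived G (carrier G)) \<subseteq> center_of G"
  proof (cases "H \<lhd> G")
    case True
    interpret Hc: comm_group "G\<lparr>carrier := H\<rparr>"
      using group.cyclic_imp_abelian_group[OF subgroup_imp_group[OF H] cyc] .
    have "a \<otimes> b = b \<otimes> a" if "a \<in> H" "b \<in> H" for a b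
      using Hc.m_comm[of a b] that by simp
    then have "derived G (derived G (carrier G)) \<subseteq> {\<one>}"
      by (rule derived_derived_trivial_of_normal_maximal_comm[OF True max])
    then show ?thesis using subgroup.one_closed[OF subgroup_center_of] by auto
  next
    case False
    obtain g where "g \<in> carrier G" "H = range (\<lambda>n::int. g [^] n)"
      using cyclic_subgroup_generator[OF H cyc] .
    then interpret cyclic_maximal_nonnormal G H g
      using assms(2) max False by (intro cyclic_maximal_nonnormal.intro is_group cyclic_maximal_nonnormal_axioms.intro)
    show ?thesis by (rule derived_derived_subset_center_of)
  qed
  then show ?thesis using solvable_of_derived_derived_subset_center by blast
qed

end
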